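(* Let $K\ge2$, $N\ge1$, $z^\star\in\{1,\dots,K\}^N$, let $P^\star$ be a real $K\times K$ matrix, and let $X=(X_{ij})_{i,j\le N}$ be a random matrix with integrable entries satisfying $\mathbb{E}[X_{ij}]=P^\star_{z^\star_iz^\star_j}$ for all $i,j$. Then for every deterministic $z\in\{1,\dots,K\}^N$, $$\Delta_N(z^\star,z)\,\overline{\delta}(z)\le\frac{2K}{K-1}\,\overline L_N(z),$$ so in particular $\Delta_N(z^\star,z)\le\frac{2K}{(K-1)\overline\delta(z)}\overline L_N(z)$ whenever $\overline\delta(z)>0$. Moreover $\overline L_N(z^\star)=0$.
   Context: Notation: $I_p(z)=\{i: z_i=p\}$, $N_p(z)=|I_p(z)|$. $\widehat\mu_{iq}(z)=\frac{1}{N_q(z)}\sum_{j\in I_q(z)}X_{ij}$ if $N_q(z)\ne0$, else $0$; $\widehat\nu_{pj}(z)=\frac{1}{N_p(z)}\sum_{i\in I_p(z)}X_{ij}$ if $N_p(z)\ne0$, else $0$; $\widehat P_{pq}(z)=\frac{1}{N_p(z)N_q(z)}\sum_{i\in I_p(z)}\sum_{j\in I_q(z)}X_{ij}$ if $N_p(z)N_q(z)\ne0$, else $0$. For deterministic $z$: $\overline\mu_{iq}(z)=\mathbb{E}[\widehat\mu_{iq}(z)]$, $\overline\nu_{qi}(z)=\mathbb{E}[\widehat\nu_{qi}(z)]$, $\overline P_{pq}(z)=\mathbb{E}[\widehat P_{pq}(z)]$. $\overline L_N(z)=\frac1N\sum_{i=1}^N\sum_{q=1}^K\big(|\overline\mu_{iq}(z)-\overline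 P_{z_iq}(z)|+|\overline\nu_{qi}(z)-\overline P_{qz_i}(z)|\big)$. $\overline{\delta}(z)=\min_{p_1\ne p_2}\max_q\big(|\overline P_{p_1q}(z)-\overline P_{p_2q}(z)|+|\overline P_{qp_1}(z)-\overline P_{qp_2}(z)|\big)$. $\Delta_N(z,z')=\frac{K}{N^2(K-1)}\sum_{i,j=1}^N\mathbb{1}_{z_i=z_j}\mathbb{1}_{z'_i\neq z'_j}$. *)

theory Defs
  imports "HOL-Probability.Probability"
begin

definition Iset :: "nat \<Rightarrow> (nat \<Rightarrow> nat) \<Rightarrow> nat \<Rightarrow> nat set" where
  "Iset N z p = {i \<in> {1..N}. z i = p}"

definition Ncnt :: "nat \<Rightarrow> (nat \<Rightarrow> nat) \<Rightarrow> nat \<Rightarrow> nat" where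
  "Ncnt N z p = card (Iset N z p)"

definition mu_hat :: "nat \<Rightarrow> (nat \<Rightarrow> nat \<Rightarrow> 'a \<Rightarrow> real) \<Rightarrow> (nat \<Rightarrow> nat) \<Rightarrow> nat \<Rightarrow> nat \<Rightarrow> 'a \<Rightarrow> real" where
  "mu_hat N X z i q \<omega> = (if Ncnt N z q \<noteq> 0
     then (\<Sum>j\<in>Iset N z q. X i j \<omega>) / real (Ncnt N z q) else 0)"

definition nu_hat :: "nat \<Rightarrow> (nat \<Rightarrow> nat \<Rightarrow> 'a \<Rightarrow> real) \<Rightarrow> (nat \<Rightarrow> nat) \<Rightarrow> nat \<Rightarrow> nat \<Rightarrow> 'a \<Rightarrow> real" where
  "nu_hat N X z p j \<omega> = (if Ncnt N z p \<noteq> 0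
     then (\<Sum>i\<in>Iset N z p. X i j \<omega>) / real (Ncnt N z p) else 0)"

definition P_hat :: "nat \<Rightarrow> (nat \<Rightarrow> nat \<Rightarrow> 'a \<Rightarrow> real) \<Rightarrow> (nat \<Rightarrow> nat) \<Rightarrow> nat \<Rightarrow> nat \<Rightarrow> 'a \<Rightarrow> real" where
  "P_hat N X z p q \<omega> = (if Ncnt N z p * Ncnt N z q \<noteq> 0
     then (\<Sum>i\<in>Iset N z p. \<Sum>j\<in>Iset N z q. X i j \<omega>) / real (Ncnt N z p * Ncnt N z q) else 0)"

definition mu_bar :: "'a measure \<Rightarrow> nat \<Rightarrow> (nat \<Rightarrow> nat \<Rightarrow> 'a \<Rightarrow> real) \<Rightarrow> (nat \<Rightarrow> nat) \<Rightarrow> nat \<Rightarrow> nat \<Rightarrow> real" where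
  "mu_bar M N X z i q = integral\<^sup>L M (mu_hat N X z i q)"

definition nu_bar :: "'a measure \<Rightarrow> nat \<Rightarrow> (nat \<Rightarrow> nat \<Rightarrow> 'a \<Rightarrow> real) \<Rightarrow> (nat \<Rightarrow> nat) \<Rightarrow> nat \<Rightarrow> nat \<Rightarrow> real" where
  "nu_bar M N X z q i = integral\<^sup>L M (nu_hat N X z q i)"

definition P_bar :: "'a measure \<Rightarrow> nat \<Rightarrow> (nat \<Rightarrow> nat \<Rightarrow> 'a \<Rightarrow> real) \<Rightarrow> (nat \<Rightarrow> nat) \<Rightarrow> nat \<Rightarrow> nat \<Rightarrow> real" where
  "P_bar M N X z p q = integral\<^sup>L M (P_hat N X z p q)"

definition L_bar :: "'a measure \<Rightarrow> nat \<Rightarrow> nat \<Rightarrow> (nat \<Rightarrow> nat \<Rightarrow> 'a \<Rightarrow> real) \<Rightarrow> (nat \<Rightarrow> nat) \<Rightarrow> real" where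
  "L_bar M N K X z = (1 / real N) * (\<Sum>i\<in>{1..N}. \<Sum>q\<in>{1..K}.
      \<bar>mu_bar M N X z i q - P_bar M N X z (z i) q\<bar> + \<bar>nu_bar M N X z q i - P_bar M N X z q (z i)\<bar>)"

definition delta_bar :: "'a measure \<Rightarrow> nat \<Rightarrow> nat \<Rightarrow> (nat \<Rightarrow> nat \<Rightarrow> 'a \<Rightarrow> real) \<Rightarrow> (nat \<Rightarrow> nat) \<Rightarrow> real" where
  "delta_bar M N K X z = Min {Max {\<bar>P_bar M N X z p1 q - P_bar M N X z p2 q\<bar> + \<bar>P_bar M N X z q p1 - P_bar M N X z q p2\<bar>
        | q. q \<in> {1..K}} | p1 p2. p1 \<in> {1..K} \<and> p2 \<in> {1..K} \<and> p1 \<noteq> p2}"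

definition Delta_N :: "nat \<Rightarrow> nat \<Rightarrow> (nat \<Rightarrow> nat) \<Rightarrow> (nat \<Rightarrow> nat) \<Rightarrow> real" where
  "Delta_N N K z z' = real K / (real N ^ 2 * (real K - 1)) *
     (\<Sum>i\<in>{1..N}. \<Sum>j\<in>{1..N}. if z i = z j \<and> z' i \<noteq> z' j then 1 else 0)"

end

theory Submission
  imports Defs
begin

(*
  Under the model, the expected profiles mu_bar i and nu_bar i of a node depend on i only through
  its true block zstar i.  So if zstar i = zstar j but z i \<noteq> z j, the triangle inequality bounds
  the separation of the blocks z i and z j, and hence delta_bar z, by the sum of the losses of i
  and j.  Summing over the N^2 (K-1)/K * Delta_N pairs of this kind, each loss is counted at most
  2N times, which gives the first inequality.  Under the true labels every block average of the
  mean matrix is an entry of Pstar, so each node matches its block and L_bar zstar = 0.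
*)

lemma Iset_subset: "Iset N z p \<subseteq> {1..N}"
  unfolding Iset_def by auto

lemma finite_Iset: "finite (Iset N z p)"
  using finite_subset[OF Iset_subset] by blast

lemma Ncnt_label_nonzero: "i \<in> {1..N} \<Longrightarrow> Ncnt N z (z i) \<noteq> 0"
  unfolding Ncnt_def using finite_Iset[of N z "z i"] by (auto simp: Iset_def card_eq_0_iff)

lemma sum_Iset_label:
  fixes f :: "nat \<Rightarrow> real"
  shows "(\<Sum>j\<in>Iset N z p. f (z j)) = real (Ncnt N z p) * f p"
  unfolding Ncnt_def by (simp add: Iset_def)

lemma Min_offdiag_le:
  fixes G :: "'b \<Rightarrow> 'b \<Rightarrow> 'c::linorder"
  assumes "finite A" "a \<in> A" "b \<in> A" "a \<noteq> b"
  shows "Min {G p1 p2 | p1 p2. p1 \<in> A \<and> p2 \<in> A \<and> p1 \<noteq> p2} \<le> G a b"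
proof (rule Min_le)
  have "{G p1 p2 | p1 p2. p1 \<in> A \<and> p2 \<in> A \<and> p1 \<noteq> p2} \<subseteq> case_prod G ` (A \<times> A)"
    by auto
  then show "finite {G p1 p2 | p1 p2. p1 \<in> A \<and> p2 \<in> A \<and> p1 \<noteq> p2}"
    using assms(1) finite_subset by blast
  show "G a b \<in> {G p1 p2 | p1 p2. p1 \<in> A \<and> p2 \<in> A \<and> p1 \<noteq> p2}"
    using assms by blast
qed

lemma sum_pair_indicator_mult_le:
  fixes a :: "'b \<Rightarrow> real"
  assumes "finite S" "\<And>i. i \<in> S \<Longrightarrow> 0 \<le> a i"
    and "\<And>i j. i \<in> S \<Longrightarrow> j \<in> S \<Longrightarrow> R i j \<Longrightarrow> d \<le> a i + a j"
  shows "(\<Sum>i\<in>S. \<Sum>j\<in>S. if R i j then 1 else 0) * d \<le> 2 * real (card S) * sum a S"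
proof -
  have "(\<Sum>i\<in>S. \<Sum>j\<in>S. if R i j then 1 else 0) * d = (\<Sum>i\<in>S. \<Sum>j\<in>S. if R i j then d else 0)"
    by (auto simp: sum_distrib_right intro!: sum.cong)
  also have "\<dots> \<le> (\<Sum>i\<in>S. \<Sum>j\<in>S. a i + a j)"
    by (intro sum_mono) (use assms(2,3) in auto)
  also have "\<dots> = 2 * real (card S) * sum a S"
    by (simp add: sum.distrib sum_distrib_left[symmetric] sum_distrib_right[symmetric] mult.commute)
  finally show ?thesis .
qed

definition node_loss :: "'a measure \<Rightarrow> nat \<Rightarrow> nat \<Rightarrow> (nat \<Rightarrow> nat \<Rightarrow> 'a \<Rightarrow> real) \<Rightarrow> (nat \<Rightarrow> nat) \<Rightarrow> nat \<Rightarrow> real"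
  where "node_loss M N K X z i = (\<Sum>q\<in>{1..K}.
      \<bar>mu_bar M N X z i q - P_bar M N X z (z i) q\<bar> + \<bar>nu_bar M N X z q i - P_bar M N X z q (z i)\<bar>)"

lemma node_loss_nonneg: "0 \<le> node_loss M N K X z i"
  unfolding node_loss_def by (intro sum_nonneg) auto

lemma L_bar_eq_node_loss: "L_bar M N K X z = (\<Sum>i\<in>{1..N}. node_loss M N K X z i) / real N"
  unfolding L_bar_def node_loss_def by simp

lemma delta_bar_le_node_loss_add:
  assumes "z i \<in> {1..K}" "z j \<in> {1..K}" "z i \<noteq> z j"
    and mu_eq: "\<And>q. mu_bar M N X z i q = mu_bar M N X z j q"
    and nu_eq: "\<And>q. nu_bar M N X z q i = nu_bar M N X z q j"
  shows "delta_bar M N K X z \<le> node_loss M N K X z i + node_loss M N K X z j"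
proof -
  let ?P = "P_bar M N X z"
  let ?loss = "\<lambda>k q. \<bar>mu_bar M N X z k q - ?P (z k) q\<bar> + \<bar>nu_bar M N X z q k - ?P q (z k)\<bar>"
  have "delta_bar M N K X z \<le> Max {\<bar>?P (z i) q - ?P (z j) q\<bar> + \<bar>?P q (z i) - ?P q (z j)\<bar> | q. q \<in> {1..K}}"
    unfolding delta_bar_def by (rule Min_offdiag_le) (use assms(1-3) in auto)
  also have "\<dots> \<le> (\<Sum>q\<in>{1..K}. ?loss i q + ?loss j q)"
  proof (subst Max_le_iff, safe)
    fix q :: nat assume q: "q \<in> {1..K}"
    have "\<bar>?P (z i) q - ?P (z j) q\<bar> + \<bar>?P q (z i) - ?P q (z j)\<bar> \<le> ?loss i q + ?loss j q"
      using mu_eq[of q] nu_eq[of q] by linarith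
    also have "\<dots> \<le> (\<Sum>q\<in>{1..K}. ?loss i q + ?loss j q)"
      by (rule member_le_sum) (use q in auto)
    finally show "\<bar>?P (z i) q - ?P (z j) q\<bar> + \<bar>?P q (z i) - ?P q (z j)\<bar> \<le> \<dots>" .
  qed (use assms(1) in auto)
  also have "\<dots> = node_loss M N K X z i + node_loss M N K X z j"
    unfolding node_loss_def by (simp add: sum.distrib)
  finally show ?thesis .
qed

lemma Delta_N_mult_le:
  assumes "K \<ge> 2" "N \<ge> 1"
    and "\<And>i j. i \<in> {1..N} \<Longrightarrow> j \<in> {1..N} \<Longrightarrow> zstar i = zstar j \<Longrightarrow> z i \<noteq> z j \<Longrightarrow> d \<le> a i + a j"
    and "\<And>i. i \<in> {1..N} \<Longrightarrow> 0 \<le> a i"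
  shows "Delta_N N K zstar z * d \<le> 2 * real K / (real K - 1) * ((\<Sum>i\<in>{1..N}. a i) / real N)"
proof -
  let ?c = "real K / (real N ^ 2 * (real K - 1))"
  have "Delta_N N K zstar z * d
      = ?c * ((\<Sum>i\<in>{1..N}. \<Sum>j\<in>{1..N}. if zstar i = zstar j \<and> z i \<noteq> z j then 1 else 0) * d)"
    unfolding Delta_N_def by simp
  also have "\<dots> \<le> ?c * (2 * real N * (\<Sum>i\<in>{1..N}. a i))"
    using sum_pair_indicator_mult_le[of "{1..N}" a "\<lambda>i j. zstar i = zstar j \<and> z i \<noteq> z j" d] assms
    by (intro mult_left_mono) auto
  also have "\<dots> = 2 * real K / (real K - 1) * ((\<Sum>i\<in>{1..N}. a i) / real N)"
    using assms(1,2) by (simp add: field_simps power2_eq_square)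
  finally show ?thesis .
qed

locale block_mean_model =
  fixes M :: "'a measure" and N :: nat and X :: "nat \<Rightarrow> nat \<Rightarrow> 'a \<Rightarrow> real"
    and zstar :: "nat \<Rightarrow> nat" and Pstar :: "nat \<Rightarrow> nat \<Rightarrow> real"
  assumes integrable_X: "\<And>i j. i \<in> {1..N} \<Longrightarrow> j \<in> {1..N} \<Longrightarrow> integrable M (X i j)"
    and integral_X: "\<And>i j. i \<in> {1..N} \<Longrightarrow> j \<in> {1..N} \<Longrightarrow> integral\<^sup>L M (X i j) = Pstar (zstar i) (zstar j)"
begin

lemma integral_row_sum:
  assumes "i \<in> {1..N}"
  shows "integral\<^sup>L M (\<lambda>\<omega>. \<Sum>j\<in>Iset N z q. X i j \<omega>) = (\<Sum>j\<in>Iset N z q. Pstar (zstar i) (zstar j))"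
proof -
  have "integral\<^sup>L M (\<lambda>\<omega>. \<Sum>j\<in>Iset N z q. X i j \<omega>) = (\<Sum>j\<in>Iset N z q. integral\<^sup>L M (X i j))"
    using assms Iset_subset[of N z q] by (intro Bochner_Integration.integral_sum integrable_X) auto
  also have "\<dots> = (\<Sum>j\<in>Iset N z q. Pstar (zstar i) (zstar j))"
    using assms Iset_subset[of N z q] by (intro sum.cong refl integral_X) auto
  finally show ?thesis .
qed

lemma integral_column_sum:
  assumes "j \<in> {1..N}"
  shows "integral\<^sup>L M (\<lambda>\<omega>. \<Sum>i\<in>Iset N z p. X i j \<omega>) = (\<Sum>i\<in>Iset N z p. Pstar (zstar i) (zstar j))"
proof -
  have "integral\<^sup>L M (\<lambda>\<omega>. \<Sum>i\<in>Iset N z p. X i j \<omega>) = (\<Sum>i\<in>Iset N z p. integral\<^sup>L M (X i j))"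
    using assms Iset_subset[of N z p] by (intro Bochner_Integration.integral_sum integrable_X) auto
  also have "\<dots> = (\<Sum>i\<in>Iset N z p. Pstar (zstar i) (zstar j))"
    using assms Iset_subset[of N z p] by (intro sum.cong refl integral_X) auto
  finally show ?thesis .
qed

lemma mu_bar_eq:
  assumes "i \<in> {1..N}"
  shows "mu_bar M N X z i q = (if Ncnt N z q \<noteq> 0 then
      (\<Sum>j\<in>Iset N z q. Pstar (zstar i) (zstar j)) / real (Ncnt N z q) else 0)"
  unfolding mu_bar_def mu_hat_def using integral_row_sum[OF assms] by simp

lemma nu_bar_eq:
  assumes "j \<in> {1..N}"
  shows "nu_bar M N X z p j = (if Ncnt N z p \<noteq> 0 then
      (\<Sum>i\<in>Iset N z p. Pstar (zstar i) (zstar j)) / real (Ncnt N z p) else 0)"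
  unfolding nu_bar_def nu_hat_def using integral_column_sum[OF assms] by simp

lemma P_bar_eq:
  "P_bar M N X z p q = (if Ncnt N z p * Ncnt N z q \<noteq> 0 then
      (\<Sum>i\<in>Iset N z p. \<Sum>j\<in>Iset N z q. Pstar (zstar i) (zstar j)) / real (Ncnt N z p * Ncnt N z q) else 0)"
proof -
  have "integral\<^sup>L M (\<lambda>\<omega>. \<Sum>i\<in>Iset N z p. \<Sum>j\<in>Iset N z q. X i j \<omega>)
      = (\<Sum>i\<in>Iset N z p. integral\<^sup>L M (\<lambda>\<omega>. \<Sum>j\<in>Iset N z q. X i j \<omega>))"
    using Iset_subset[of N z p] Iset_subset[of N z q]
    by (intro Bochner_Integration.integral_sum Bochner_Integration.integrable_sum integrable_X) auto
  also have "\<dots> = (\<Sum>i\<in>Iset N z p. \<Sum>j\<in>Iset N z q. Pstar (zstar i) (zstar j))"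
    using Iset_subset[of N z p] by (intro sum.cong refl integral_row_sum) auto
  finally have "integral\<^sup>L M (\<lambda>\<omega>. \<Sum>i\<in>Iset N z p. \<Sum>j\<in>Iset N z q. X i j \<omega>)
      = (\<Sum>i\<in>Iset N z p. \<Sum>j\<in>Iset N z q. Pstar (zstar i) (zstar j))" .
  then show ?thesis
    unfolding P_bar_def P_hat_def by (simp del: of_nat_mult)
qed

lemma mu_bar_same_block:
  assumes "i \<in> {1..N}" "j \<in> {1..N}" "zstar i = zstar j"
  shows "mu_bar M N X z i q = mu_bar M N X z j q"
  using assms by (simp add: mu_bar_eq)

lemma nu_bar_same_block:
  assumes "i \<in> {1..N}" "j \<in> {1..N}" "zstar i = zstar j"
  shows "nu_bar M N X z q i = nu_bar M N X z q j"
  using assms by (simp add: nu_bar_eq)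

lemma delta_bar_le_node_loss_add_same_block:
  assumes "z i \<in> {1..K}" "z j \<in> {1..K}" "z i \<noteq> z j"
    and "i \<in> {1..N}" "j \<in> {1..N}" "zstar i = zstar j"
  shows "delta_bar M N K X z \<le> node_loss M N K X z i + node_loss M N K X z j"
  using assms by (intro delta_bar_le_node_loss_add mu_bar_same_block nu_bar_same_block)

lemma mu_bar_true_labels:
  assumes "i \<in> {1..N}"
  shows "mu_bar M N X zstar i q = P_bar M N X zstar (zstar i) q"
  using Ncnt_label_nonzero[OF assms, of zstar]
  by (simp add: mu_bar_eq[OF assms] P_bar_eq sum_Iset_label[where f="\<lambda>y. Pstar _ y"]
      sum_Iset_label[where f="\<lambda>x. real (Ncnt N zstar q) * Pstar x q"])

lemma nu_bar_true_labels:
  assumes "i \<in> {1..N}"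
  shows "nu_bar M N X zstar q i = P_bar M N X zstar q (zstar i)"
  using Ncnt_label_nonzero[OF assms, of zstar]
  by (simp add: nu_bar_eq[OF assms] P_bar_eq sum_Iset_label[where f="\<lambda>x. Pstar x (zstar i)"]
      sum_Iset_label[where f="\<lambda>y. Pstar _ y"]
      sum_Iset_label[where f="\<lambda>x. real (Ncnt N zstar (zstar i)) * Pstar x (zstar i)"])

lemma L_bar_true_labels: "L_bar M N K X zstar = 0"
  unfolding L_bar_def by (intro mult_eq_0_iff[THEN iffD2] disjI2 sum.neutral ballI)
    (simp add: mu_bar_true_labels nu_bar_true_labels)

end

theorem mainTheorem2:
  fixes M :: "'a measure" and N K :: nat
    and zstar z :: "nat \<Rightarrow> nat" and Pstar :: "nat \<Rightarrow> nat \<Rightarrow> real"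
    and X :: "nat \<Rightarrow> nat \<Rightarrow> 'a \<Rightarrow> real"
  assumes "prob_space M"
    and "K \<ge> 2" and "N \<ge> 1"
    and "\<forall>i\<in>{1..N}. zstar i \<in> {1..K}"
    and "\<forall>i\<in>{1..N}. \<forall>j\<in>{1..N}. integrable M (X i j)"
    and "\<forall>i\<in>{1..N}. \<forall>j\<in>{1..N}. integral\<^sup>L M (X i j) = Pstar (zstar i) (zstar j)"
    and "\<forall>i\<in>{1..N}. z i \<in> {1..K}"
  shows "Delta_N N K zstar z * delta_bar M N K X z \<le> 2 * real K / (real K - 1) * L_bar M N K X z
     \<and> (delta_bar M N K X z > 0 \<longrightarrow>
           Delta_N N K zstar z \<le> 2 * real K / ((real K - 1) * delta_bar M N K X z) * L_bar M N K X z)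
     \<and> L_bar M N K X zstar = 0"
proof -
  interpret block_mean_model M N X zstar Pstar
    using assms(5,6) by unfold_locales auto
  let ?\<delta> = "delta_bar M N K X z"
  have bound: "Delta_N N K zstar z * ?\<delta> \<le> 2 * real K / (real K - 1) * L_bar M N K X z"
    unfolding L_bar_eq_node_loss
    using assms(2,3,7) by (intro Delta_N_mult_le delta_bar_le_node_loss_add_same_block node_loss_nonneg) auto
  have "Delta_N N K zstar z \<le> 2 * real K / ((real K - 1) * ?\<delta>) * L_bar M N K X z" if "?\<delta> > 0"
  proof -
    have "Delta_N N K zstar z \<le> 2 * real K / (real K - 1) * L_bar M N K X z / ?\<delta>"
      using bound that by (subst pos_le_divide_eq) auto
    then show ?thesis by simp
  qed
  then show ?thesis
    using bound L_bar_true_labels by blast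
qed

end
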